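(* Let $H$ be an almost-breakable monoid. Then: (i) the irreducibles of $\mathcal{P}_{\mathrm{fin},1}(H)$ are precisely the $2$-element subsets of $H$ containing $1_H$; (ii) every element of $\mathcal{P}_{\mathrm{fin},1}(H)$ admits a square-free factorization into irreducibles, i.e. a factorization in which no irreducible occurs more than once as a letter.
   Context: A monoid $H$ is almost-breakable if for all $x,y\in H$, $xy\in\{x,y\}$ or $yx\in\{x,y\}$. $\mathcal{P}_{\mathrm{fin},1}(H)$ denotes the set of non-empty finite subsets of $H$ containing $1_H$, a monoid under $XY=\{xy:x\in X,y\in Y\}$ with identity $\{1_H\}$. In a monoid $M$: $x\mid_M y$ iff $y\in MxM$; $x,y$ are associated if each divides the other; proper divisor means divides but not associated. A unit-divisor divides $1_M$; otherwise it is a non-unit-divisor. An irreducible is a non-unit-divisor $a$ with $a\neq xy$ for all non-unit-divisors $x,y$ properly dividing $a$. A factorization of an element $X$ is a finite word (possibly empty, for the identity) over the irreducibles whose product is $X$. *)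

theory Defs
  imports Main
begin

definition almost_breakable :: "'a::monoid_mult itself \<Rightarrow> bool" where
  "almost_breakable _ \<longleftrightarrow> (\<forall>x y::'a. x * y \<in> {x, y} \<or> y * x \<in> {x, y})"

definition Pfin1 :: "'a::monoid_mult set set" where
  "Pfin1 = {X. finite X \<and> X \<noteq> {} \<and> 1 \<in> X}"

definition setmul :: "'a::monoid_mult set \<Rightarrow> 'a set \<Rightarrow> 'a set" where
  "setmul X Y = {x * y | x y. x \<in> X \<and> y \<in> Y}"

definition pdvd :: "'a::monoid_mult set \<Rightarrow> 'a set \<Rightarrow> bool" where
  "pdvd X Y \<longleftrightarrow> (\<exists>A\<in>Pfin1. \<exists>B\<in>Pfin1. Y = setmul (setmul A X) B)"

definition passoc :: "'a::monoid_mult set \<Rightarrow> 'a set \<Rightarrow> bool" where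
  "passoc X Y \<longleftrightarrow> pdvd X Y \<and> pdvd Y X"

definition proper_pdvd :: "'a::monoid_mult set \<Rightarrow> 'a set \<Rightarrow> bool" where
  "proper_pdvd X Y \<longleftrightarrow> pdvd X Y \<and> \<not> passoc X Y"

definition non_unit_divisor :: "'a::monoid_mult set \<Rightarrow> bool" where
  "non_unit_divisor X \<longleftrightarrow> X \<in> Pfin1 \<and> \<not> pdvd X {1}"

definition pirreducible :: "'a::monoid_mult set \<Rightarrow> bool" where
  "pirreducible A \<longleftrightarrow> non_unit_divisor A \<and>
     (\<forall>X Y. non_unit_divisor X \<and> non_unit_divisor Y \<and> proper_pdvd X A \<and> proper_pdvd Y A
        \<longrightarrow> A \<noteq> setmul X Y)"

definition setprod :: "'a::monoid_mult set list \<Rightarrow> 'a set" where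
  "setprod xs = foldr setmul xs {1}"

definition is_factorization :: "'a::monoid_mult set list \<Rightarrow> 'a set \<Rightarrow> bool" where
  "is_factorization xs X \<longleftrightarrow> (\<forall>A\<in>set xs. pirreducible A) \<and> setprod xs = X"

end

theory Submission
  imports Defs
begin

text \<open>
  An almost-breakable monoid is a band, and in it every finite non-empty set \<open>S\<close> contains an
  element absorbing \<open>S\<close> from one side: choose \<open>s \<in> S\<close> with \<open>s t s = s\<close> for all \<open>t \<in> S\<close>
  (a minimal element of \<open>S\<close> for two-sided divisibility in the band) and break \<open>s\<close> against
  each \<open>t\<close>. Applied to \<open>S = A - {1}\<close> for \<open>A \<in> Pfin1\<close>, this gives \<open>A = {1,s}(A - {s})\<close> or
  \<open>A = (A - {s}){1,s}\<close>. If \<open>A\<close> has more than two elements, both factors are proper non-unit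
  divisors, so irreducibles have two elements; iterating the peeling yields a factorization whose
  letters \<open>{1,s}\<close> are pairwise distinct, because each peeled \<open>s\<close> leaves the remaining set.
\<close>

lemma almost_breakableD:
  assumes "almost_breakable TYPE('a::monoid_mult)"
  shows "(x::'a) * y = x \<or> x * y = y \<or> y * x = x \<or> y * x = y"
  using assms unfolding almost_breakable_def by blast

lemma almost_breakable_idem:
  assumes "almost_breakable TYPE('a::monoid_mult)"
  shows "(x::'a) * x = x"
  using almost_breakableD[OF assms, of x x] by auto

lemma band_sandwich_trans:
  fixes x s t :: "'a::monoid_mult"
  assumes idem: "\<And>y::'a. y * y = y"
    and xs: "x * s * x = x" and st: "s * t * s = s"
  shows "x * t * x = x"
proof -
  have sts: "x * s * t * s = x * s" using st by (simp add: mult.assoc)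
  have "x * t * x = (x * s * t * s) * x * t * x" using xs sts by simp
  also have "\<dots> = (x * s * t) * (x * s * t) * s * x * t * x" by (simp only: idem)
  also have "\<dots> = (x * s * t) * (x * s * t * s) * x * t * x" by (simp only: mult.assoc)
  also have "\<dots> = x * s * t * (x * s * x) * t * (x * s * x)" using sts xs by (simp add: mult.assoc)
  also have "\<dots> = x * s * ((t * x * s * x) * (t * x * s * x))" by (simp only: mult.assoc)
  also have "\<dots> = x * s * (t * x * s * x)" by (simp only: idem)
  also have "\<dots> = x * s * t * x * (s * t * s) * x" using st by (simp add: mult.assoc)
  also have "\<dots> = (x * s * t) * (x * s * t) * s * x" by (simp only: mult.assoc)
  also have "\<dots> = x" using idem sts xs by simp
  finally show ?thesis .
qed

lemma almost_breakable_sandwich_minimal: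
  assumes AB: "almost_breakable TYPE('a::monoid_mult)"
    and "finite (S::'a set)" "S \<noteq> {}"
  shows "\<exists>s\<in>S. \<forall>t\<in>S. s * t * s = s"
  using assms(2,3)
proof (induction S rule: finite_ne_induct)
  case (singleton x)
  then show ?case using almost_breakable_idem[OF AB] by simp
next
  case (insert x F)
  have idem: "\<And>y::'a. y * y = y" using almost_breakable_idem[OF AB] .
  obtain s where s: "s \<in> F" "\<forall>t\<in>F. s * t * s = s" using insert.IH by blast
  show ?case
  proof (cases "s * x * s = s")
    case True
    with s show ?thesis by auto
  next
    case False
    have "s * x \<noteq> s" using False idem by auto
    moreover have "x * s \<noteq> s" using False idem by (auto simp: mult.assoc)
    ultimately have "s * x = x \<or> x * s = x" using almost_breakableD[OF AB, of s x] by blast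
    then have "x * s * x = x" using idem by (metis mult.assoc)
    then have "\<forall>t\<in>insert x F. x * t * x = x"
      using s band_sandwich_trans[OF idem] idem by auto
    then show ?thesis by blast
  qed
qed

lemma almost_breakable_sandwich_absorbs:
  fixes s t :: "'a::monoid_mult"
  assumes AB: "almost_breakable TYPE('a)" and sts: "s * t * s = s"
  shows "s * t = s \<or> t * s = s"
  using almost_breakableD[OF AB, of s t]
proof (elim disjE)
  assume "s * t = t"
  then have "t * s = s * t * s" by simp
  with sts show ?thesis by simp
next
  assume "t * s = t"
  then have "s * t = s * t * s" by (simp add: mult.assoc)
  with sts show ?thesis by simp
qed simp_all

lemma almost_breakable_not_mixed_absorbing:
  fixes s t u :: "'a::monoid_mult"
  assumes AB: "almost_breakable TYPE('a)"
    and ts: "t * s = s" and st: "s * t \<noteq> s" and su: "s * u = s" and us: "u * s \<noteq> s"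
  shows False
proof -
  \<comment> \<open>Break \<open>s t\<close> against \<open>u s\<close>: each of the four outcomes forces \<open>s t = s\<close> or \<open>u s = s\<close>.\<close>
  define p where "p = s * t"
  define q where "q = u * s"
  have idem: "s * s = s" using almost_breakable_idem[OF AB] .
  have ps: "p * s = s" using ts idem unfolding p_def by (simp add: mult.assoc)
  have sp: "s * p = p" using idem unfolding p_def by (simp add: mult.assoc[symmetric])
  have sq: "s * q = s" using su idem unfolding q_def by (simp add: mult.assoc[symmetric])
  have qs: "q * s = q" using idem unfolding q_def by (simp add: mult.assoc)
  have "p \<noteq> s" "q \<noteq> s" using st us unfolding p_def q_def by auto
  moreover have "p * q * s = p * q" "s * (p * q) = p * q" "s * (q * p) = p" "q * p * s = q"
    using ps sp sq qs by (simp_all add: mult.assoc[symmetric]) (simp_all add: mult.assoc)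
  ultimately show False
    using almost_breakableD[OF AB, of p q] ps sq by auto
qed

lemma almost_breakable_one_sided_zero:
  assumes AB: "almost_breakable TYPE('a::monoid_mult)"
    and "finite (S::'a set)" "S \<noteq> {}"
  shows "\<exists>s\<in>S. (\<forall>t\<in>S. s * t = s) \<or> (\<forall>t\<in>S. t * s = s)"
proof -
  obtain s where s: "s \<in> S" "\<forall>t\<in>S. s * t * s = s"
    using almost_breakable_sandwich_minimal[OF assms] by blast
  have "(\<forall>t\<in>S. s * t = s) \<or> (\<forall>t\<in>S. t * s = s)"
  proof (rule ccontr)
    assume "\<not> ?thesis"
    then obtain t u where tu: "t \<in> S" "s * t \<noteq> s" "u \<in> S" "u * s \<noteq> s" by blast
    then have "t * s = s" "s * u = s"
      using s almost_breakable_sandwich_absorbs[OF AB] by blast+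
    with tu show False using almost_breakable_not_mixed_absorbing[OF AB] by blast
  qed
  with s show ?thesis by blast
qed

lemma setmul_assoc: "setmul (setmul X Y) Z = setmul X (setmul Y Z)"
  unfolding setmul_def by (auto simp: mult.assoc) (metis mult.assoc)+

lemma setmul_one_left [simp]: "setmul {1} X = X"
  unfolding setmul_def by auto

lemma setmul_one_right [simp]: "setmul X {1} = X"
  unfolding setmul_def by auto

lemma setprod_Nil [simp]: "setprod [] = {1}"
  unfolding setprod_def by simp

lemma setprod_Cons [simp]: "setprod (B # xs) = setmul B (setprod xs)"
  unfolding setprod_def by simp

lemma setprod_append: "setprod (xs @ ys) = setmul (setprod xs) (setprod ys)"
  by (induction xs) (simp_all add: setmul_assoc)

lemma one_mem_Pfin1 [simp]: "{1} \<in> Pfin1"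
  by (simp add: Pfin1_def)

lemma pdvd_imp_subset: "pdvd X Y \<Longrightarrow> X \<subseteq> Y"
  unfolding pdvd_def Pfin1_def setmul_def by force

lemma pdvd_refl: "pdvd X X"
  unfolding pdvd_def using one_mem_Pfin1 setmul_one_left setmul_one_right by metis

lemma pdvd_setmul:
  assumes "X \<in> Pfin1" "Y \<in> Pfin1"
  shows "pdvd X (setmul X Y)" "pdvd Y (setmul X Y)"
  unfolding pdvd_def using assms one_mem_Pfin1 by (metis setmul_one_left setmul_one_right)+

lemma non_unit_divisor_iff: "non_unit_divisor X \<longleftrightarrow> X \<in> Pfin1 \<and> X \<noteq> {1}"
  unfolding non_unit_divisor_def using pdvd_imp_subset pdvd_refl by (auto simp: Pfin1_def)

lemma proper_pdvd_iff: "proper_pdvd X A \<longleftrightarrow> pdvd X A \<and> X \<noteq> A"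
  unfolding proper_pdvd_def passoc_def using pdvd_imp_subset pdvd_refl by blast

lemma pirreducible_doubleton:
  assumes "(a::'a::monoid_mult) \<noteq> 1"
  shows "pirreducible {1, a}"
  unfolding pirreducible_def non_unit_divisor_iff proper_pdvd_iff
  using assms pdvd_imp_subset by (auto simp: Pfin1_def)

lemma not_pirreducible_setmul:
  assumes "X \<in> Pfin1" "Y \<in> Pfin1" "X \<noteq> {1}" "Y \<noteq> {1}" "X \<noteq> A" "Y \<noteq> A"
    and "setmul X Y = A"
  shows "\<not> pirreducible A"
  using assms pdvd_setmul[of X Y]
  unfolding pirreducible_def non_unit_divisor_iff proper_pdvd_iff by blast

lemma setmul_left_zero_peel:
  assumes "1 \<in> A" "s \<in> A" "s \<noteq> 1" "\<forall>t\<in>A. s * t = s"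
  shows "setmul {1, s} (A - {s}) = A"
proof -
  have "a \<in> setmul {1, s} (A - {s})" if "a \<in> A" for a
  proof (cases "a = s")
    case True
    then have "a = s * 1" by simp
    with assms show ?thesis unfolding setmul_def by blast
  next
    case False
    then have "a = 1 * a" by simp
    with that False show ?thesis unfolding setmul_def by blast
  qed
  then show ?thesis using assms unfolding setmul_def by auto
qed

lemma setmul_right_zero_peel:
  assumes "1 \<in> A" "s \<in> A" "s \<noteq> 1" "\<forall>t\<in>A. t * s = s"
  shows "setmul (A - {s}) {1, s} = A"
proof -
  have "a \<in> setmul (A - {s}) {1, s}" if "a \<in> A" for a
  proof (cases "a = s")
    case True
    then have "a = 1 * s" by simp
    with assms show ?thesis unfolding setmul_def by blast
  next
    case False
    then have "a = a * 1" by simp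
    with that False show ?thesis unfolding setmul_def by blast
  qed
  then show ?thesis using assms unfolding setmul_def by auto
qed

lemma almost_breakable_peel:
  assumes AB: "almost_breakable TYPE('a::monoid_mult)"
    and "(A::'a set) \<in> Pfin1" "A \<noteq> {1}"
  obtains s where "s \<in> A" "s \<noteq> 1"
    "setmul {1, s} (A - {s}) = A \<or> setmul (A - {s}) {1, s} = A"
proof -
  have "finite (A - {1})" "A - {1} \<noteq> {}" "1 \<in> A" using assms(2,3) by (auto simp: Pfin1_def)
  then obtain s where s: "s \<in> A - {1}"
    and "(\<forall>t\<in>A - {1}. s * t = s) \<or> (\<forall>t\<in>A - {1}. t * s = s)"
    using almost_breakable_one_sided_zero[OF AB] by blast
  then have "(\<forall>t\<in>A. s * t = s) \<or> (\<forall>t\<in>A. t * s = s)" by auto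
  then have "setmul {1, s} (A - {s}) = A \<or> setmul (A - {s}) {1, s} = A"
    using s \<open>1 \<in> A\<close> setmul_left_zero_peel[of A s] setmul_right_zero_peel[of A s] by auto
  with s show thesis using that by blast
qed

lemma almost_breakable_pirreducible_imp_doubleton:
  assumes AB: "almost_breakable TYPE('a::monoid_mult)"
    and A: "(A::'a set) \<in> Pfin1" and irr: "pirreducible A"
  shows "\<exists>a. a \<noteq> 1 \<and> A = {1, a}"
proof (rule ccontr)
  assume not_doubleton: "\<nexists>a. a \<noteq> 1 \<and> A = {1, a}"
  have "A \<noteq> {1}" using irr unfolding pirreducible_def non_unit_divisor_iff by blast
  then obtain s where s: "s \<in> A" "s \<noteq> 1"
    and peel: "setmul {1, s} (A - {s}) = A \<or> setmul (A - {s}) {1, s} = A"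
    using almost_breakable_peel[OF AB A] by blast
  have "{1, s} \<in> Pfin1" "{1, s} \<noteq> {1}" "{1, s} \<noteq> A"
    using s not_doubleton by (auto simp: Pfin1_def)
  moreover have "A - {s} \<in> Pfin1" "A - {s} \<noteq> {1}" "A - {s} \<noteq> A"
    using A s not_doubleton by (auto simp: Pfin1_def)
  ultimately show False
    using peel irr not_pirreducible_setmul[of "{1, s}" "A - {s}" A]
      not_pirreducible_setmul[of "A - {s}" "{1, s}" A] by blast
qed

lemma almost_breakable_distinct_doubleton_factorization:
  assumes AB: "almost_breakable TYPE('a::monoid_mult)"
  shows "(A::'a set) \<in> Pfin1 \<Longrightarrow>
    \<exists>xs. set xs \<subseteq> {{1, a} | a. a \<in> A - {1}} \<and> setprod xs = A \<and> distinct xs"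
proof (induction "card A" arbitrary: A rule: less_induct)
  case less
  show ?case
  proof (cases "A = {1}")
    case True
    then show ?thesis by (intro exI[of _ "[]"]) simp
  next
    case False
    obtain s where s: "s \<in> A" "s \<noteq> 1"
      and peel: "setmul {1, s} (A - {s}) = A \<or> setmul (A - {s}) {1, s} = A"
      using almost_breakable_peel[OF AB less.prems False] by blast
    have "finite A" "1 \<in> A" using less.prems by (auto simp: Pfin1_def)
    then have "A - {s} \<in> Pfin1" "card (A - {s}) < card A"
      using s by (auto simp: Pfin1_def intro: card_Diff1_less simp del: card_Diff_insert)
    then obtain xs where xs: "set xs \<subseteq> {{1, a} | a. a \<in> A - {s} - {1}}"
      "setprod xs = A - {s}" "distinct xs"
      using less.hyps by blast
    have "{1, s} \<notin> set xs"
      using xs(1) s(2) by (auto simp: doubleton_eq_iff)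
    moreover have "set xs \<subseteq> {{1, a} | a. a \<in> A - {1}}" using xs(1) by blast
    moreover have "{1, s} \<in> {{1, a} | a. a \<in> A - {1}}" using s by blast
    ultimately have letters: "set ({1, s} # xs) \<subseteq> {{1, a} | a. a \<in> A - {1}}"
      "distinct ({1, s} # xs)" "set (xs @ [{1, s}]) \<subseteq> {{1, a} | a. a \<in> A - {1}}"
      "distinct (xs @ [{1, s}])"
      using xs(3) by auto
    have "setprod ({1, s} # xs) = A \<or> setprod (xs @ [{1, s}]) = A"
      using peel xs(2) by (simp add: setprod_append)
    with letters show ?thesis by blast
  qed
qed

theorem proposition4p2:
  assumes "almost_breakable TYPE('a::monoid_mult)"
  shows "{A \<in> (Pfin1 :: 'a set set). pirreducible A} = {{1, a} | a. a \<noteq> 1} \<and>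
         (\<forall>X \<in> (Pfin1 :: 'a set set). \<exists>xs. is_factorization xs X \<and> distinct xs)"
proof
  show "{A \<in> (Pfin1 :: 'a set set). pirreducible A} = {{1, a} | a. a \<noteq> 1}"
  proof (intro equalityI subsetI)
    fix A assume "A \<in> {A \<in> (Pfin1 :: 'a set set). pirreducible A}"
    then show "A \<in> {{1, a} | a. a \<noteq> 1}"
      using almost_breakable_pirreducible_imp_doubleton[OF assms] by blast
  next
    fix A assume "A \<in> {{1, a} | a::'a. a \<noteq> 1}"
    then show "A \<in> {A \<in> Pfin1. pirreducible A}"
      using pirreducible_doubleton by (auto simp: Pfin1_def)
  qed
  show "\<forall>X \<in> (Pfin1 :: 'a set set). \<exists>xs. is_factorization xs X \<and> distinct xs"
  proof
    fix X :: "'a set" assume "X \<in> Pfin1"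
    then obtain xs where "set xs \<subseteq> {{1, a} | a. a \<in> X - {1}}" "setprod xs = X" "distinct xs"
      using almost_breakable_distinct_doubleton_factorization[OF assms] by blast
    moreover from this(1) have "\<forall>A\<in>set xs. pirreducible A"
      using pirreducible_doubleton by auto
    ultimately show "\<exists>xs. is_factorization xs X \<and> distinct xs"
      unfolding is_factorization_def by blast
  qed
qed

end
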